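(* Let $\Omega\subseteq\mathbb{R}^n$. If $\varphi\in\Phi_{\mathrm w}(\Omega)$ satisfies condition (A2), then so does its conjugate $\varphi^*$.
   Context: A function $f:[0,\infty)\to[0,\infty]$ is $a$-almost increasing ($a\ge1$) if $f(s)\le a f(t)$ for all $s\le t$. A function $\varphi:\Omega\times[0,\infty)\to[0,\infty]$ is a weak $\Phi$-function, $\varphi\in\Phi_{\mathrm w}(\Omega)$, if for a.e. $x\in\Omega$: $x\mapsto\varphi(x,|f(x)|)$ is measurable for every measurable $f:\Omega\to\mathbb{R}$; $t\mapsto\varphi(x,t)$ is increasing (non-decreasing); $\varphi(x,0)=\lim_{t\to0^+}\varphi(x,t)=0$ and $\lim_{t\to\infty}\varphi(x,t)=\infty$; and $t\mapsto\varphi(x,t)/t$ is $a$-almost increasing on $(0,\infty)$ with $a\ge1$ independent of $x$. The conjugate is $\varphi^*(x,t):=\sup\{st-\varphi(x,s):s\ge0\}$. For any $\psi:\Omega\times[0,\infty)\to[0,\infty]$ the left-inverse is $\psi^{-1}(x,\tau):=\inf\{t\ge0:\psi(x,t)\ge\tau\}$. Condition (A2) for $\psi$: for every $\sigma>0$ there exist $\beta\in(0,1]$ and $h\in L^1(\Omega)\cap L^\infty(\Omega)$, $h\ge0$, such that for a.e. $x,y\in\Omega$, $\beta\psi^{-1}(x,\tau)\le\psi^{-1}(y,\tau+h(x)+h(y))$ for all $\tau\in[0,\sigma]$. *)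

theory Defs
  imports "HOL-Analysis.Analysis"
begin

text \<open>Generalized Orlicz functions on \<Omega> \<subseteq> R^n are modelled as
  functions \<open>\<phi> :: 'a \<Rightarrow> real \<Rightarrow> ereal\<close>, 'a a Euclidean space; only arguments
  x in \<Omega> and t \<ge> 0 are relevant.  "a.e." refers to Lebesgue measure on \<Omega>.\<close>

definition almost_increasing_on :: "real set \<Rightarrow> real \<Rightarrow> (real \<Rightarrow> ereal) \<Rightarrow> bool" where
  "almost_increasing_on I a f \<longleftrightarrow>
     (\<forall>s\<in>I. \<forall>t\<in>I. s \<le> t \<longrightarrow> f s \<le> ereal a * f t)"

definition weak_Phi :: "'a::euclidean_space set \<Rightarrow> ('a \<Rightarrow> real \<Rightarrow> ereal) \<Rightarrow> bool" where
  "weak_Phi \<Omega> \<phi> \<longleftrightarrow>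
     (\<forall>x\<in>\<Omega>. \<forall>t\<ge>0. 0 \<le> \<phi> x t) \<and>
     (\<forall>f \<in> borel_measurable (lebesgue_on \<Omega>).
        (\<lambda>x. \<phi> x \<bar>f x\<bar>) \<in> borel_measurable (lebesgue_on \<Omega>)) \<and>
     (\<exists>a\<ge>1. AE x in lebesgue_on \<Omega>.
        mono_on {0..} (\<phi> x) \<and>
        \<phi> x 0 = 0 \<and> (\<phi> x \<longlongrightarrow> 0) (at_right 0) \<and>
        (\<phi> x \<longlongrightarrow> \<infinity>) at_top \<and>
        almost_increasing_on {0<..} a (\<lambda>t. \<phi> x t / ereal t))"

definition conjugate :: "('a \<Rightarrow> real \<Rightarrow> ereal) \<Rightarrow> 'a \<Rightarrow> real \<Rightarrow> ereal" where
  "conjugate \<phi> x t = (SUP s\<in>{0..}. ereal (s * t) - \<phi> x s)"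

text \<open>Left-inverse: \<open>\<psi>\<^sup>-\<^sup>1(x,\<tau>) = inf {t \<ge> 0 : \<psi>(x,t) \<ge> \<tau>}\<close> (inf of empty set = \<infinity>).\<close>
definition left_inv :: "('a \<Rightarrow> real \<Rightarrow> ereal) \<Rightarrow> 'a \<Rightarrow> real \<Rightarrow> ereal" where
  "left_inv \<psi> x \<tau> = Inf (ereal ` {t. 0 \<le> t \<and> ereal \<tau> \<le> \<psi> x t})"

definition cond_A2 :: "'a::euclidean_space set \<Rightarrow> ('a \<Rightarrow> real \<Rightarrow> ereal) \<Rightarrow> bool" where
  "cond_A2 \<Omega> \<psi> \<longleftrightarrow>
     (\<forall>\<sigma>>0. \<exists>(\<beta>::real) (h::'a \<Rightarrow> real). 0 < \<beta> \<and> \<beta> \<le> 1 \<and>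
        integrable (lebesgue_on \<Omega>) h \<and>
        (\<exists>M. AE x in lebesgue_on \<Omega>. \<bar>h x\<bar> \<le> M) \<and>
        (AE x in lebesgue_on \<Omega>. 0 \<le> h x) \<and>
        (AE x in lebesgue_on \<Omega>. AE y in lebesgue_on \<Omega>.
           \<forall>\<tau>\<in>{0..\<sigma>}. ereal \<beta> * left_inv \<psi> x \<tau> \<le> left_inv \<psi> y (\<tau> + h x + h y)))"

end

theory Submission
  imports Defs
begin

text \<open>The left inverse of the conjugate is comparable to \<open>\<tau> / \<phi>\<^sup>-\<^sup>1(\<tau>)\<close>: it is at most
  \<open>4\<tau> / \<phi>\<^sup>-\<^sup>1(\<tau>)\<close>, and at least \<open>\<tau> / (2a w)\<close> whenever \<open>\<phi>\<^sup>-\<^sup>1(\<tau>) < w\<close>.  Since in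
  addition \<open>\<phi>\<^sup>-\<^sup>1(\<lambda>\<tau>) \<le> 2a\<lambda> \<phi>\<^sup>-\<^sup>1(\<tau>)\<close> for \<open>\<lambda> \<ge> 1\<close>, the (A2) inequality for \<open>\<phi>\<^sup>*\<close> at
  the pair \<open>(x, y)\<close> follows from the (A2) inequality for \<open>\<phi>\<close> at the pair \<open>(y, x)\<close>, at the
  cost of a factor \<open>96a\<^sup>2\<close> in \<open>\<beta>\<close>; the same scaling extends (A2) from \<open>[0,1]\<close> to any \<open>[0,S]\<close>.
  Interchanging \<open>x\<close> and \<open>y\<close> in the iterated "a.e." needs Fubini, hence joint measurability;
  for that the inequality is tested only at rational parameters, where the left inverse is a
  countable infimum.\<close>

definition weak_Phi_fun :: "real \<Rightarrow> (real \<Rightarrow> ereal) \<Rightarrow> bool" where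
  "weak_Phi_fun a f \<longleftrightarrow> 1 \<le> a \<and> (\<forall>t\<ge>0. 0 \<le> f t) \<and> mono_on {0..} f \<and> f 0 = 0 \<and>
     (f \<longlongrightarrow> 0) (at_right 0) \<and> (f \<longlongrightarrow> \<infinity>) at_top \<and>
     almost_increasing_on {0<..} a (\<lambda>t. f t / ereal t)"

definition left_inverse :: "(real \<Rightarrow> ereal) \<Rightarrow> real \<Rightarrow> ereal" where
  "left_inverse f \<tau> = Inf (ereal ` {t. 0 \<le> t \<and> ereal \<tau> \<le> f t})"

definition conjugate_fun :: "(real \<Rightarrow> ereal) \<Rightarrow> real \<Rightarrow> ereal" where
  "conjugate_fun f t = (SUP s\<in>{0..}. ereal (s * t) - f s)"

lemma left_inv_eq_left_inverse: "left_inv \<psi> x = left_inverse (\<psi> x)"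
  by (simp add: left_inv_def left_inverse_def fun_eq_iff)

lemma left_inv_conjugate: "left_inv (conjugate \<phi>) x = left_inverse (conjugate_fun (\<phi> x))"
proof -
  have "conjugate \<phi> x = conjugate_fun (\<phi> x)" by (simp add: conjugate_def conjugate_fun_def fun_eq_iff)
  then show ?thesis by (simp add: left_inv_eq_left_inverse)
qed

lemma left_inverse_nonneg: "0 \<le> left_inverse f \<tau>"
  unfolding left_inverse_def by (rule Inf_greatest) auto

lemma left_inverse_le: "0 \<le> t \<Longrightarrow> ereal \<tau> \<le> f t \<Longrightarrow> left_inverse f \<tau> \<le> ereal t"
  unfolding left_inverse_def by (rule Inf_lower) auto

lemma left_inverse_mono: "\<tau>1 \<le> \<tau>2 \<Longrightarrow> left_inverse f \<tau>1 \<le> left_inverse f \<tau>2"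
  unfolding left_inverse_def
  by (intro Inf_superset_mono image_mono) (auto intro: order_trans[of "ereal \<tau>1" "ereal \<tau>2"])

lemma less_left_inverse_imp_less: "0 \<le> t \<Longrightarrow> ereal t < left_inverse f \<tau> \<Longrightarrow> f t < ereal \<tau>"
  using left_inverse_le[of t \<tau> f] by (meson not_le)

lemma left_inverse_less_imp_le:
  assumes "mono_on {0..} f" "0 \<le> t" "left_inverse f \<tau> < ereal t"
  shows "ereal \<tau> \<le> f t"
proof -
  from assms(3) obtain y where y: "0 \<le> y" "ereal \<tau> \<le> f y" "y < t"
    unfolding left_inverse_def Inf_less_iff by auto
  have "f y \<le> f t" using assms(1,2) y by (auto intro: mono_onD)
  then show ?thesis using y by simp
qed

lemma weak_Phi_fun_linear_growth:
  assumes f: "weak_Phi_fun a f" and st: "0 < s" "s \<le> t" and c: "ereal c \<le> f s"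
  shows "ereal (c * t / (a * s)) \<le> f t"
proof -
  have a: "1 \<le> a" and nn: "\<And>t. t \<ge> 0 \<Longrightarrow> 0 \<le> f t"
    and ai: "f s / ereal s \<le> ereal a * (f t / ereal t)"
    using f st unfolding weak_Phi_fun_def almost_increasing_on_def by auto
  show ?thesis
  proof (cases "f t")
    case (real r)
    show ?thesis
    proof (cases "f s")
      case (real q)
      have "q / s \<le> a * (r / t)" using ai \<open>f t = ereal r\<close> real st by simp
      then have "q * t \<le> a * r * s" using st by (simp add: field_simps)
      moreover have "c \<le> q" using c real by simp
      ultimately have "c * t \<le> a * r * s" using st by (smt (verit) mult_right_mono)
      then have "c * t / (a * s) \<le> r" using st a by (simp add: field_simps)
      then show ?thesis using \<open>f t = ereal r\<close> by simp
    qed (use ai real st nn[of s] in auto)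
  qed (use nn[of t] st in auto)
qed

lemma left_inverse_pos_finite:
  assumes f: "weak_Phi_fun a f" and \<tau>: "0 < \<tau>"
  obtains u where "0 < u" "left_inverse f \<tau> = ereal u"
proof -
  have top: "(f \<longlongrightarrow> \<infinity>) at_top" and zero: "(f \<longlongrightarrow> 0) (at_right 0)" and f0: "f 0 = 0"
    using f unfolding weak_Phi_fun_def by auto
  have "eventually (\<lambda>t. ereal \<tau> < f t) at_top"
    by (rule order_tendstoD(1)[OF top]) simp
  then obtain N where N: "\<And>t. t \<ge> N \<Longrightarrow> ereal \<tau> < f t"
    unfolding eventually_at_top_linorder by auto
  have upper: "left_inverse f \<tau> \<le> ereal (max N 0)"
    by (rule left_inverse_le) (use N[of "max N 0"] in auto)
  have "eventually (\<lambda>t. f t < ereal \<tau>) (at_right 0)"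
    by (rule order_tendstoD(2)[OF zero]) (simp add: \<tau>)
  then obtain b where b: "b > 0" "\<And>y. 0 < y \<Longrightarrow> y < b \<Longrightarrow> f y < ereal \<tau>"
    unfolding eventually_at_right[OF zero_less_one] by auto
  have lower: "ereal b \<le> left_inverse f \<tau>"
    unfolding left_inverse_def
  proof (rule Inf_greatest, clarify)
    fix t assume t: "0 \<le> t" "ereal \<tau> \<le> f t"
    show "ereal b \<le> ereal t"
    proof (rule ccontr)
      assume "\<not> ereal b \<le> ereal t"
      then show False using b(2)[of t] t f0 \<tau> by (cases "t = 0") auto
    qed
  qed
  show ?thesis
  proof (cases "left_inverse f \<tau>")
    case (real u)
    with lower b(1) show ?thesis by (intro that[of u]) auto
  qed (use upper lower in \<open>auto simp: max_def split: if_splits\<close>)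
qed

lemma left_inverse_scale:
  assumes f: "weak_Phi_fun a f" and s: "0 < s1" "s1 \<le> s2"
    and u: "left_inverse f s1 = ereal u" "0 < u"
  shows "left_inverse f s2 \<le> ereal (2 * a * s2 / s1 * u)"
proof -
  have a: "1 \<le> a" and mono: "mono_on {0..} f" using f unfolding weak_Phi_fun_def by auto
  have "s1 \<le> a * s2" using mult_right_mono[of 1 a s2] s a by linarith
  moreover have "ereal s1 \<le> f (2 * u)"
    by (rule left_inverse_less_imp_le[OF mono]) (use u in auto)
  ultimately have "ereal (s1 * (a * s2 / s1 * (2 * u)) / (a * (2 * u))) \<le> f (a * s2 / s1 * (2 * u))"
    using u s a by (intro weak_Phi_fun_linear_growth[OF f]) (simp_all add: field_simps)
  moreover have "s1 * (a * s2 / s1 * (2 * u)) / (a * (2 * u)) = s2"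
    using u s a by (simp add: field_simps)
  ultimately have "left_inverse f s2 \<le> ereal (a * s2 / s1 * (2 * u))"
    using u s a by (intro left_inverse_le) simp_all
  then show ?thesis by (simp add: field_simps)
qed

lemma left_inverse_conjugate_fun_zero:
  assumes f: "weak_Phi_fun a f"
  shows "left_inverse (conjugate_fun f) 0 = 0"
proof (rule antisym)
  have "ereal (0 * 0) - f 0 \<le> conjugate_fun f 0" unfolding conjugate_fun_def by (rule SUP_upper) auto
  with f have "ereal 0 \<le> conjugate_fun f 0" unfolding weak_Phi_fun_def by simp
  then show "left_inverse (conjugate_fun f) 0 \<le> 0"
    using left_inverse_le[of 0 0 "conjugate_fun f"] by (simp add: zero_ereal_def)
qed (rule left_inverse_nonneg)

lemma left_inverse_conjugate_fun_upper:
  assumes f: "weak_Phi_fun a f" and "0 < \<tau>" and u: "left_inverse f \<tau> = ereal u" "0 < u"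
  shows "left_inverse (conjugate_fun f) \<tau> \<le> ereal (4 * \<tau> / u)"
proof (rule left_inverse_le)
  show "0 \<le> 4 * \<tau> / u" using \<open>0 < \<tau>\<close> u by simp
  have "0 \<le> f (u / 2)" using f u unfolding weak_Phi_fun_def by auto
  moreover have "f (u / 2) < ereal \<tau>" by (rule less_left_inverse_imp_less) (use u in auto)
  ultimately obtain q where q: "f (u / 2) = ereal q" "q < \<tau>" by (cases "f (u / 2)") auto
  have "ereal (u / 2 * (4 * \<tau> / u)) - f (u / 2) \<le> conjugate_fun f (4 * \<tau> / u)"
    unfolding conjugate_fun_def by (rule SUP_upper) (use u in auto)
  moreover have "u / 2 * (4 * \<tau> / u) = 2 * \<tau>" using u by (simp add: field_simps)
  ultimately show "ereal \<tau> \<le> conjugate_fun f (4 * \<tau> / u)"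
    using q by (smt (verit) ereal_less_eq(3) ereal_minus(1) order_trans)
qed

lemma conjugate_fun_le_linear:
  assumes f: "weak_Phi_fun a f" and w: "0 < w" "ereal \<tau> \<le> f w" and t: "0 \<le> t" "t \<le> \<tau> / (a * w)"
  shows "conjugate_fun f t \<le> ereal (w * t)"
  unfolding conjugate_fun_def
proof (rule SUP_least)
  have nn: "\<And>s. 0 \<le> s \<Longrightarrow> 0 \<le> f s" using f unfolding weak_Phi_fun_def by auto
  fix s :: real assume "s \<in> {0..}"
  then have s: "0 \<le> s" by simp
  show "ereal (s * t) - f s \<le> ereal (w * t)"
  proof (cases "s < w")
    case True
    then have "s * t \<le> w * t" using t by (simp add: mult_right_mono)
    then show ?thesis using nn[OF s] by (cases "f s") auto
  next
    case False
    have "ereal (\<tau> * s / (a * w)) \<le> f s"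
      by (rule weak_Phi_fun_linear_growth[OF f _ _ w(2)]) (use w False in auto)
    moreover have "s * t \<le> \<tau> * s / (a * w)"
      using mult_left_mono[OF t(2) s] by (simp add: mult.commute)
    moreover have "0 \<le> w * t" using w t by simp
    ultimately show ?thesis by (cases "f s") auto
  qed
qed

lemma left_inverse_conjugate_fun_lower:
  assumes f: "weak_Phi_fun a f" and "0 < \<tau>" and w: "0 < w" "left_inverse f \<tau> < ereal w"
  shows "ereal (\<tau> / (2 * a * w)) \<le> left_inverse (conjugate_fun f) \<tau>"
  unfolding left_inverse_def
proof (rule Inf_greatest, clarify)
  have a: "1 \<le> a" and mono: "mono_on {0..} f" using f unfolding weak_Phi_fun_def by auto
  have fw: "ereal \<tau> \<le> f w" by (rule left_inverse_less_imp_le[OF mono]) (use w in auto)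
  fix t assume t: "0 \<le> t" "ereal \<tau> \<le> conjugate_fun f t"
  show "ereal (\<tau> / (2 * a * w)) \<le> ereal t"
  proof (rule ccontr)
    assume "\<not> ?thesis"
    then have lt: "t < \<tau> / (2 * a * w)" by simp
    also have "\<dots> \<le> \<tau> / (a * w)" using \<open>0 < \<tau>\<close> a w by (simp add: field_simps)
    finally have "conjugate_fun f t \<le> ereal (w * t)"
      using conjugate_fun_le_linear[OF f w(1) fw t(1)] by simp
    moreover have "w * t < \<tau>"
    proof -
      have "w * t < w * (\<tau> / (2 * a * w))" by (rule mult_strict_left_mono[OF lt w(1)])
      also have "\<dots> \<le> \<tau>" using a w \<open>0 < \<tau>\<close> by (simp add: field_simps)
      finally show ?thesis .
    qed
    ultimately show False using t by (smt (verit) ereal_less_eq(3) order_trans)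
  qed
qed

lemma A2_ineq_conjugate_fun_pos:
  assumes f: "weak_Phi_fun a f" and g: "weak_Phi_fun a g"
    and "0 < \<tau>" "0 \<le> H" "0 < \<beta>"
    and A: "ereal \<beta> * left_inverse g (\<tau> + H) \<le> left_inverse f (3 * (\<tau> + H))"
  shows "ereal (\<beta> / (96 * a\<^sup>2)) * left_inverse (conjugate_fun f) \<tau> \<le> left_inverse (conjugate_fun g) (\<tau> + H)"
proof -
  define T where "T = \<tau> + H"
  have a: "1 \<le> a" using f unfolding weak_Phi_fun_def by auto
  have "\<tau> \<le> T" "0 < T" using \<open>0 < \<tau>\<close> \<open>0 \<le> H\<close> by (simp_all add: T_def)
  obtain u where u: "0 < u" "left_inverse f \<tau> = ereal u"
    using left_inverse_pos_finite[OF f \<open>0 < \<tau>\<close>] by blast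
  obtain v where v: "0 < v" "left_inverse g T = ereal v"
    using left_inverse_pos_finite[OF g \<open>0 < T\<close>] by blast
  define K where "K = 2 * a * (3 * T) / \<tau> * u"
  have "ereal (\<beta> * v) \<le> left_inverse f (3 * T)" using A v by (simp add: T_def)
  also have "\<dots> \<le> ereal K"
    unfolding K_def by (rule left_inverse_scale[OF f \<open>0 < \<tau>\<close> _ u(2,1)]) (use \<open>\<tau> \<le> T\<close> \<open>0 < T\<close> in linarith)
  finally have "\<beta> * v \<le> K" by simp
  define w where "w = 2 * K / \<beta>" \<comment> \<open>the factor 2 only makes \<open>left_inverse g T < w\<close> strict\<close>
  have "0 < K" using a u \<open>0 < \<tau>\<close> \<open>0 < T\<close> by (simp add: K_def)
  with \<open>\<beta> * v \<le> K\<close> v \<open>0 < \<beta>\<close> have w: "0 < w" "left_inverse g T < ereal w"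
    by (auto simp: w_def field_simps)
  have "ereal (\<beta> / (96 * a\<^sup>2)) * left_inverse (conjugate_fun f) \<tau> \<le> ereal (\<beta> / (96 * a\<^sup>2)) * ereal (4 * \<tau> / u)"
    by (rule ereal_mult_left_mono[OF left_inverse_conjugate_fun_upper[OF f \<open>0 < \<tau>\<close> u(2,1)]])
      (use \<open>0 < \<beta>\<close> in simp)
  also have "\<dots> = ereal (T / (2 * a * w))"
    using a u \<open>0 < \<tau>\<close> \<open>0 < T\<close> \<open>0 < \<beta>\<close> by (simp add: w_def K_def field_simps power2_eq_square)
  also have "\<dots> \<le> left_inverse (conjugate_fun g) T"
    by (rule left_inverse_conjugate_fun_lower[OF g \<open>0 < T\<close> w])
  finally show ?thesis by (simp add: T_def)
qed

lemma A2_ineq_conjugate_fun: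
  assumes f: "weak_Phi_fun a f" and g: "weak_Phi_fun a g"
    and "0 \<le> H" "0 < \<beta>" "\<sigma> + H < S"
    and A: "\<forall>s r. 0 \<le> s \<longrightarrow> s < S \<longrightarrow> H < r \<longrightarrow> ereal \<beta> * left_inverse g s \<le> left_inverse f (s + r)"
  shows "\<forall>\<tau>\<in>{0..\<sigma>}. ereal (\<beta> / (96 * a\<^sup>2)) * left_inverse (conjugate_fun f) \<tau> \<le> left_inverse (conjugate_fun g) (\<tau> + H)"
proof
  fix \<tau> assume \<tau>: "\<tau> \<in> {0..\<sigma>}"
  show "ereal (\<beta> / (96 * a\<^sup>2)) * left_inverse (conjugate_fun f) \<tau> \<le> left_inverse (conjugate_fun g) (\<tau> + H)"
  proof (cases "\<tau> = 0")
    case True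
    then show ?thesis by (simp add: left_inverse_conjugate_fun_zero[OF f] left_inverse_nonneg)
  next
    case False
    with \<tau> have "0 < \<tau>" by simp
    have "ereal \<beta> * left_inverse g (\<tau> + H) \<le> left_inverse f ((\<tau> + H) + 2 * (\<tau> + H))"
      by (rule A[rule_format]) (use \<tau> \<open>0 < \<tau>\<close> \<open>0 \<le> H\<close> \<open>\<sigma> + H < S\<close> in auto)
    moreover have "(\<tau> + H) + 2 * (\<tau> + H) = 3 * (\<tau> + H)" by simp
    ultimately show ?thesis
      by (intro A2_ineq_conjugate_fun_pos[OF f g \<open>0 < \<tau>\<close> \<open>0 \<le> H\<close> \<open>0 < \<beta>\<close>]) simp
  qed
qed

lemma A2_ineq_extend:
  assumes f: "weak_Phi_fun a f" and "0 \<le> \<beta>" "1 \<le> S"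
    and A: "\<forall>\<tau>\<in>{0..1}. ereal \<beta> * left_inverse f \<tau> \<le> left_inverse g (\<tau> + H)"
  shows "\<forall>s\<in>{0..S}. ereal (\<beta> / (2 * a * S)) * left_inverse f s \<le> left_inverse g (s + H)"
proof
  fix s assume s: "s \<in> {0..S}"
  have a: "1 \<le> a" using f unfolding weak_Phi_fun_def by auto
  have "1 \<le> 2 * a * S" using a \<open>1 \<le> S\<close> mult_mono[of 1 a 1 S] by linarith
  then have "0 < 2 * a * S" by linarith
  with \<open>1 \<le> 2 * a * S\<close> have c: "0 \<le> \<beta> / (2 * a * S)" "\<beta> / (2 * a * S) \<le> \<beta>"
    using \<open>0 \<le> \<beta>\<close> mult_left_mono[of 1 "2 * a * S" \<beta>] by (simp_all add: pos_divide_le_eq)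
  show "ereal (\<beta> / (2 * a * S)) * left_inverse f s \<le> left_inverse g (s + H)"
  proof (cases "s \<le> 1")
    case True
    have "ereal (\<beta> / (2 * a * S)) * left_inverse f s \<le> ereal \<beta> * left_inverse f s"
      by (rule ereal_mult_right_mono) (use c left_inverse_nonneg in auto)
    also have "\<dots> \<le> left_inverse g (s + H)" using A s True by auto
    finally show ?thesis .
  next
    case False
    obtain u where u: "0 < u" "left_inverse f 1 = ereal u"
      using left_inverse_pos_finite[OF f zero_less_one] by blast
    have "ereal (\<beta> / (2 * a * S)) * left_inverse f s \<le> ereal (\<beta> / (2 * a * S)) * ereal (2 * a * s / 1 * u)"
      by (rule ereal_mult_left_mono[OF left_inverse_scale[OF f _ _ u(2,1)]]) (use False c in auto)
    also have "\<dots> = ereal (\<beta> * u * (s / S))" using a \<open>1 \<le> S\<close> by (simp add: field_simps)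
    also have "\<dots> \<le> ereal (\<beta> * u)"
      using mult_left_le[of "s / S" "\<beta> * u"] s \<open>1 \<le> S\<close> \<open>0 \<le> \<beta>\<close> u by simp
    also have "\<dots> \<le> left_inverse g (1 + H)" using bspec[OF A, of 1] u by simp
    also have "\<dots> \<le> left_inverse g (s + H)" by (rule left_inverse_mono) (use False in auto)
    finally show ?thesis .
  qed
qed

lemma A2_ineq_of_rat:
  assumes A: "\<forall>s\<in>\<rat>. \<forall>r\<in>\<rat>. 0 \<le> s \<longrightarrow> s \<le> S \<longrightarrow> H \<le> r \<longrightarrow>
      ereal \<beta> * left_inverse g s \<le> left_inverse f (s + r)"
    and "0 \<le> \<beta>" "0 \<le> s" "s < S" "H < r"
  shows "ereal \<beta> * left_inverse g s \<le> left_inverse f (s + r)"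
proof -
  obtain s' where s': "s' \<in> \<rat>" "s < s'" "s' < S" "s' < s + (r - H) / 2"
    using Rats_dense_in_real[of s "min S (s + (r - H) / 2)"] \<open>s < S\<close> \<open>H < r\<close> by auto
  obtain r' where r': "r' \<in> \<rat>" "H < r'" "r' < H + (r - H) / 2"
    using Rats_dense_in_real[of H "H + (r - H) / 2"] \<open>H < r\<close> by auto
  have "ereal \<beta> * left_inverse g s \<le> ereal \<beta> * left_inverse g s'"
    using left_inverse_mono[of s s' g] s' \<open>0 \<le> \<beta>\<close> by (intro ereal_mult_left_mono) auto
  also have "\<dots> \<le> left_inverse f (s' + r')"
    using A s' r' \<open>0 \<le> s\<close> by auto
  also have "\<dots> \<le> left_inverse f (s + r)"
    by (rule left_inverse_mono) (use s' r' in argo)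
  finally show ?thesis .
qed

text \<open>Restricting the infimum to rational \<open>t\<close> makes it measurable in a parameter of \<open>f\<close>;
  for increasing \<open>f\<close> nothing changes.\<close>
definition left_inverse_rat :: "(real \<Rightarrow> ereal) \<Rightarrow> real \<Rightarrow> ereal" where
  "left_inverse_rat f \<tau> = (INF t\<in>{t\<in>\<rat>. 0 \<le> t}. if ereal \<tau> \<le> f t then ereal t else \<infinity>)"

lemma left_inverse_rat_eq:
  assumes mono: "mono_on {0..} f"
  shows "left_inverse_rat f \<tau> = left_inverse f \<tau>"
proof (rule antisym)
  show "left_inverse f \<tau> \<le> left_inverse_rat f \<tau>"
    unfolding left_inverse_rat_def by (rule INF_greatest) (auto intro: left_inverse_le)
  show "left_inverse_rat f \<tau> \<le> left_inverse f \<tau>"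
    unfolding left_inverse_def
  proof (rule Inf_greatest, clarify)
    fix t assume t: "0 \<le> t" "ereal \<tau> \<le> f t"
    have le_rat: "left_inverse_rat f \<tau> \<le> ereal q" if "q \<in> \<rat>" "t < q" for q
    proof -
      have "ereal \<tau> \<le> f q" using t that mono_onD[OF mono, of t q] by (auto intro: order_trans)
      moreover have "left_inverse_rat f \<tau> \<le> (if ereal \<tau> \<le> f q then ereal q else \<infinity>)"
        unfolding left_inverse_rat_def by (rule INF_lower) (use that t in auto)
      ultimately show ?thesis by simp
    qed
    show "left_inverse_rat f \<tau> \<le> ereal t"
    proof (rule ereal_le_epsilon2)
      fix e :: real assume "0 < e"
      then obtain q where "q \<in> \<rat>" "t < q" "q < t + e" using Rats_dense_in_real[of t "t + e"] by auto
      then show "left_inverse_rat f \<tau> \<le> ereal t + ereal e"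
        using le_rat[of q] order_trans[of _ "ereal q" "ereal (t + e)"] by auto
    qed
  qed
qed

lemma borel_measurable_left_inverse_rat:
  assumes "\<And>t. 0 \<le> t \<Longrightarrow> (\<lambda>x. \<phi> x t) \<in> borel_measurable M"
  shows "(\<lambda>x. left_inverse_rat (\<phi> x) \<tau>) \<in> borel_measurable M"
  unfolding left_inverse_rat_def
proof (rule borel_measurable_INF)
  show "countable {t \<in> \<rat>. 0 \<le> t}" by (rule countable_subset[OF _ countable_rat]) auto
  fix t :: real assume "t \<in> {t \<in> \<rat>. 0 \<le> t}"
  with assms have [measurable]: "(\<lambda>x. \<phi> x t) \<in> borel_measurable M" by auto
  show "(\<lambda>x. if ereal \<tau> \<le> \<phi> x t then ereal t else \<infinity>) \<in> borel_measurable M"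
    by measurable
qed

lemma (in pair_sigma_finite) AE_commute_ball_countable:
  assumes "countable I"
    and "\<And>i. i \<in> I \<Longrightarrow> {p \<in> space (M1 \<Otimes>\<^sub>M M2). P i (fst p) (snd p)} \<in> sets (M1 \<Otimes>\<^sub>M M2)"
    and "AE x in M1. AE y in M2. \<forall>i\<in>I. P i x y"
  shows "AE y in M2. AE x in M1. \<forall>i\<in>I. P i x y"
proof -
  have "AE x in M1. AE y in M2. P i x y" if "i \<in> I" for i
    using assms(3) by (rule eventually_mono) (use that in \<open>auto elim: eventually_mono\<close>)
  then have "AE y in M2. AE x in M1. P i x y" if "i \<in> I" for i
    using AE_commute[of "P i", OF assms(2)[OF that]] that by simp
  then show ?thesis using assms(1) by (simp add: AE_ball_countable)
qed

lemma AE_A2_ineq_swap: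
  assumes "sigma_finite_measure M"
    and meas: "\<And>t. 0 \<le> t \<Longrightarrow> (\<lambda>x. \<phi> x t) \<in> borel_measurable M" and h: "h \<in> borel_measurable M"
    and mono: "AE x in M. mono_on {0..} (\<phi> x)" and "0 \<le> \<beta>"
    and A: "AE x in M. AE y in M. \<forall>s\<in>{0..S}.
      ereal \<beta> * left_inverse (\<phi> x) s \<le> left_inverse (\<phi> y) (s + (h x + h y))"
  shows "AE y in M. AE x in M. \<forall>s r. 0 \<le> s \<longrightarrow> s < S \<longrightarrow> h x + h y < r \<longrightarrow>
      ereal \<beta> * left_inverse (\<phi> x) s \<le> left_inverse (\<phi> y) (s + r)"
proof -
  interpret sigma_finite_measure M by fact
  interpret pair_sigma_finite M M ..
  define I where "I = {s\<in>\<rat>. 0 \<le> s \<and> s \<le> S} \<times> (\<rat> :: real set)"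
  define P where "P = (\<lambda>(s, r) x y. h x + h y \<le> r \<longrightarrow>
    ereal \<beta> * left_inverse_rat (\<phi> x) s \<le> left_inverse_rat (\<phi> y) (s + r))"
  have "countable I"
    unfolding I_def by (intro countable_SIGMA countable_subset[OF _ countable_rat]) auto
  have AE_P: "AE x in M. AE y in M. \<forall>i\<in>I. P i x y"
    using A mono
  proof eventually_elim
    case x: (elim x)
    show ?case using x(1) mono
    proof eventually_elim
      case y: (elim y)
      have "ereal \<beta> * left_inverse (\<phi> x) s \<le> left_inverse (\<phi> y) (s + r)"
        if "s \<in> {0..S}" "h x + h y \<le> r" for s r
      proof -
        have "ereal \<beta> * left_inverse (\<phi> x) s \<le> left_inverse (\<phi> y) (s + (h x + h y))"
          using y(1) that(1) by blast
        also have "\<dots> \<le> left_inverse (\<phi> y) (s + r)" using that(2) by (intro left_inverse_mono) simp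
        finally show ?thesis .
      qed
      then show ?case
        by (auto simp: P_def I_def left_inverse_rat_eq[OF x(2)] left_inverse_rat_eq[OF y(2)])
    qed
  qed
  have meas_P: "{p \<in> space (M \<Otimes>\<^sub>M M). P i (fst p) (snd p)} \<in> sets (M \<Otimes>\<^sub>M M)" for i
  proof -
    note [measurable] = h borel_measurable_left_inverse_rat[OF meas]
    show ?thesis unfolding P_def by (cases i) (simp, measurable)
  qed
  have "AE y in M. AE x in M. \<forall>i\<in>I. P i x y"
    by (rule AE_commute_ball_countable[OF \<open>countable I\<close> meas_P AE_P])
  then show ?thesis using mono
  proof eventually_elim
    case y: (elim y)
    show ?case using y(1) mono
    proof eventually_elim
      case x: (elim x)
      have "\<forall>s\<in>\<rat>. \<forall>r\<in>\<rat>. 0 \<le> s \<longrightarrow> s \<le> S \<longrightarrow> h x + h y \<le> r \<longrightarrow>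
          ereal \<beta> * left_inverse (\<phi> x) s \<le> left_inverse (\<phi> y) (s + r)"
        using x(1) by (simp add: P_def I_def left_inverse_rat_eq[OF x(2)] left_inverse_rat_eq[OF y(2)])
      then show ?case by (blast intro: A2_ineq_of_rat[OF _ \<open>0 \<le> \<beta>\<close>])
    qed
  qed
qed

lemma sigma_finite_lebesgue_on: "sigma_finite_measure (lebesgue_on \<Omega>)"
proof -
  obtain C :: "'a::euclidean_space set set" where C: "countable C" "C \<subseteq> sets lborel"
    "\<Union>C = space lborel" "\<forall>c\<in>C. emeasure lborel c \<noteq> \<infinity>"
    using lborel.sigma_finite_countable by blast
  have "emeasure (lebesgue_on \<Omega>) (\<Omega> \<inter> c) \<noteq> \<infinity>" if "c \<in> C" for c
  proof -
    have "emeasure (lebesgue_on \<Omega>) (\<Omega> \<inter> c) \<le> emeasure lebesgue (\<Omega> \<inter> c)"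
      unfolding restrict_space_def emeasure_measure_of_conv by auto
    also have "\<dots> \<le> emeasure lebesgue c" using C(2) that by (intro emeasure_mono) auto
    also have "\<dots> = emeasure lborel c" using C(2) that by auto
    also have "\<dots> < \<infinity>" using C(4) that by (simp add: less_top)
    finally show ?thesis by simp
  qed
  moreover have "(\<inter>) \<Omega> ` C \<subseteq> sets (lebesgue_on \<Omega>)"
    using C(2) unfolding sets_restrict_space by blast
  moreover have "\<Union>((\<inter>) \<Omega> ` C) = space (lebesgue_on \<Omega>)"
    using C(3) by (simp add: space_restrict_space)
  ultimately show ?thesis
    unfolding sigma_finite_measure_def using C(1) by blast
qed

lemma weak_Phi_AE_weak_Phi_fun:
  assumes "weak_Phi \<Omega> \<phi>"
  obtains a where "1 \<le> a" "AE x in lebesgue_on \<Omega>. weak_Phi_fun a (\<phi> x)"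
proof -
  from assms obtain a where "1 \<le> a" and ae: "AE x in lebesgue_on \<Omega>. mono_on {0..} (\<phi> x) \<and>
      \<phi> x 0 = 0 \<and> (\<phi> x \<longlongrightarrow> 0) (at_right 0) \<and> (\<phi> x \<longlongrightarrow> \<infinity>) at_top \<and>
      almost_increasing_on {0<..} a (\<lambda>t. \<phi> x t / ereal t)"
    unfolding weak_Phi_def by blast
  have "AE x in lebesgue_on \<Omega>. weak_Phi_fun a (\<phi> x)"
    using ae AE_space
  proof eventually_elim
    case (elim x)
    with assms \<open>1 \<le> a\<close> show ?case
      by (simp add: weak_Phi_fun_def weak_Phi_def space_restrict_space)
  qed
  with \<open>1 \<le> a\<close> show thesis by (rule that)
qed

lemma weak_Phi_measurable:
  assumes "weak_Phi \<Omega> \<phi>" "0 \<le> t"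
  shows "(\<lambda>x. \<phi> x t) \<in> borel_measurable (lebesgue_on \<Omega>)"
proof -
  have "(\<lambda>x. \<phi> x \<bar>(\<lambda>_. t) x\<bar>) \<in> borel_measurable (lebesgue_on \<Omega>)"
    using assms(1) borel_measurable_const[of t] unfolding weak_Phi_def by (elim conjE bspec)
  with assms(2) show ?thesis by simp
qed

lemma cond_A2_extend:
  assumes "1 \<le> a" and G: "AE x in lebesgue_on \<Omega>. weak_Phi_fun a (\<phi> x)" and "cond_A2 \<Omega> \<phi>"
  obtains h K where "integrable (lebesgue_on \<Omega>) h" "AE x in lebesgue_on \<Omega>. 0 \<le> h x \<and> h x \<le> K"
    "\<And>S. 1 \<le> S \<Longrightarrow> \<exists>\<beta>. 0 < \<beta> \<and> \<beta> \<le> 1 \<and>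
      (AE x in lebesgue_on \<Omega>. AE y in lebesgue_on \<Omega>. \<forall>s\<in>{0..S}.
        ereal \<beta> * left_inverse (\<phi> x) s \<le> left_inverse (\<phi> y) (s + (h x + h y)))"
proof -
  obtain \<beta> h where \<beta>: "0 < \<beta>" "\<beta> \<le> 1" and h: "integrable (lebesgue_on \<Omega>) h"
    and "\<exists>K. AE x in lebesgue_on \<Omega>. \<bar>h x\<bar> \<le> K" and h0: "AE x in lebesgue_on \<Omega>. 0 \<le> h x"
    and A: "AE x in lebesgue_on \<Omega>. AE y in lebesgue_on \<Omega>. \<forall>\<tau>\<in>{0..1}.
      ereal \<beta> * left_inv \<phi> x \<tau> \<le> left_inv \<phi> y (\<tau> + h x + h y)"
    using assms(3)[unfolded cond_A2_def, rule_format, OF zero_less_one] by blast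
  then obtain K where "AE x in lebesgue_on \<Omega>. \<bar>h x\<bar> \<le> K" by blast
  with h0 have "AE x in lebesgue_on \<Omega>. 0 \<le> h x \<and> h x \<le> K" by eventually_elim auto
  moreover have "\<exists>\<beta>'. 0 < \<beta>' \<and> \<beta>' \<le> 1 \<and>
      (AE x in lebesgue_on \<Omega>. AE y in lebesgue_on \<Omega>. \<forall>s\<in>{0..S}.
        ereal \<beta>' * left_inverse (\<phi> x) s \<le> left_inverse (\<phi> y) (s + (h x + h y)))"
    if "1 \<le> S" for S
  proof (intro exI conjI)
    have "1 \<le> 2 * a * S" using mult_mono[of 1 a 1 S] \<open>1 \<le> a\<close> \<open>1 \<le> S\<close> by linarith
    with \<beta> show "0 < \<beta> / (2 * a * S)" "\<beta> / (2 * a * S) \<le> 1"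
      by (auto simp only: divide_le_eq_1 intro!: divide_pos_pos)
    show "AE x in lebesgue_on \<Omega>. AE y in lebesgue_on \<Omega>. \<forall>s\<in>{0..S}.
        ereal (\<beta> / (2 * a * S)) * left_inverse (\<phi> x) s \<le> left_inverse (\<phi> y) (s + (h x + h y))"
      using A G
    proof eventually_elim
      case x: (elim x)
      show ?case using x(1)
      proof eventually_elim
        case (elim y)
        then have "\<forall>\<tau>\<in>{0..1}. ereal \<beta> * left_inverse (\<phi> x) \<tau> \<le> left_inverse (\<phi> y) (\<tau> + (h x + h y))"
          by (simp only: left_inv_eq_left_inverse add.assoc)
        then show ?case by (rule A2_ineq_extend[OF x(2) less_imp_le[OF \<beta>(1)] that])
      qed
    qed
  qed
  ultimately show thesis using h that by blast
qed

lemma AE_A2_ineq_conjugate: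
  assumes "sigma_finite_measure M"
    and meas: "\<And>t. 0 \<le> t \<Longrightarrow> (\<lambda>x. \<phi> x t) \<in> borel_measurable M" "h \<in> borel_measurable M"
    and G: "AE x in M. weak_Phi_fun a (\<phi> x)" and hK: "AE x in M. 0 \<le> h x \<and> h x \<le> K"
    and "0 < \<beta>" "\<sigma> + 2 * K < S"
    and A: "AE x in M. AE y in M. \<forall>s\<in>{0..S}.
      ereal \<beta> * left_inverse (\<phi> x) s \<le> left_inverse (\<phi> y) (s + (h x + h y))"
  shows "AE x in M. AE y in M. \<forall>\<tau>\<in>{0..\<sigma>}.
    ereal (\<beta> / (96 * a\<^sup>2)) * left_inv (conjugate \<phi>) x \<tau> \<le> left_inv (conjugate \<phi>) y (\<tau> + h x + h y)"
proof -
  have "AE x in M. mono_on {0..} (\<phi> x)" using G by eventually_elim (simp add: weak_Phi_fun_def)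
  with assms(1) meas \<open>0 < \<beta>\<close> A
  have "AE y in M. AE x in M. \<forall>s r. 0 \<le> s \<longrightarrow> s < S \<longrightarrow> h x + h y < r \<longrightarrow>
      ereal \<beta> * left_inverse (\<phi> x) s \<le> left_inverse (\<phi> y) (s + r)"
    by (intro AE_A2_ineq_swap) auto
  then show ?thesis using G hK
  proof eventually_elim
    case x: (elim x)
    show ?case using x(1) G hK
    proof eventually_elim
      case y: (elim y)
      have "\<sigma> + (h y + h x) < S" using x(3) y(3) \<open>\<sigma> + 2 * K < S\<close> by linarith
      have "\<forall>\<tau>\<in>{0..\<sigma>}. ereal (\<beta> / (96 * a\<^sup>2)) * left_inverse (conjugate_fun (\<phi> x)) \<tau>
          \<le> left_inverse (conjugate_fun (\<phi> y)) (\<tau> + (h y + h x))"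
        by (rule A2_ineq_conjugate_fun[OF x(2) y(2) _ \<open>0 < \<beta>\<close> \<open>\<sigma> + (h y + h x) < S\<close> y(1)])
          (use x(3) y(3) in linarith)
      moreover have "\<And>\<tau>. \<tau> + h x + h y = \<tau> + (h y + h x)" by simp
      ultimately show ?case by (simp only: left_inv_conjugate)
    qed
  qed
qed

theorem lemma2p4:
  fixes \<Omega> :: "'a::euclidean_space set" and \<phi> :: "'a \<Rightarrow> real \<Rightarrow> ereal"
  assumes "weak_Phi \<Omega> \<phi>" and "cond_A2 \<Omega> \<phi>"
  shows "cond_A2 \<Omega> (conjugate \<phi>)"
  unfolding cond_A2_def
proof (intro allI impI)
  fix \<sigma> :: real assume "0 < \<sigma>"
  obtain a where "1 \<le> a" and G: "AE x in lebesgue_on \<Omega>. weak_Phi_fun a (\<phi> x)"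
    using weak_Phi_AE_weak_Phi_fun[OF assms(1)] by blast
  obtain h K where h: "integrable (lebesgue_on \<Omega>) h" and hK: "AE x in lebesgue_on \<Omega>. 0 \<le> h x \<and> h x \<le> K"
    and A: "\<And>S. 1 \<le> S \<Longrightarrow> \<exists>\<beta>. 0 < \<beta> \<and> \<beta> \<le> 1 \<and>
      (AE x in lebesgue_on \<Omega>. AE y in lebesgue_on \<Omega>. \<forall>s\<in>{0..S}.
        ereal \<beta> * left_inverse (\<phi> x) s \<le> left_inverse (\<phi> y) (s + (h x + h y)))"
    using cond_A2_extend[OF \<open>1 \<le> a\<close> G assms(2)] by blast
  define S where "S = \<sigma> + 2 * \<bar>K\<bar> + 1"
  have "1 \<le> S" "\<sigma> + 2 * K < S" using \<open>0 < \<sigma>\<close> by (auto simp: S_def)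
  then obtain \<beta> where \<beta>: "0 < \<beta>" "\<beta> \<le> 1" and AS: "AE x in lebesgue_on \<Omega>. AE y in lebesgue_on \<Omega>.
      \<forall>s\<in>{0..S}. ereal \<beta> * left_inverse (\<phi> x) s \<le> left_inverse (\<phi> y) (s + (h x + h y))"
    using A by blast
  have "1 \<le> 96 * a\<^sup>2" using one_le_power[OF \<open>1 \<le> a\<close>, of 2] by linarith
  with \<beta> have "0 < \<beta> / (96 * a\<^sup>2)" "\<beta> / (96 * a\<^sup>2) \<le> 1"
    by (auto simp only: divide_le_eq_1 intro!: divide_pos_pos)
  moreover have "AE x in lebesgue_on \<Omega>. AE y in lebesgue_on \<Omega>. \<forall>\<tau>\<in>{0..\<sigma>}. ereal (\<beta> / (96 * a\<^sup>2)) *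
      left_inv (conjugate \<phi>) x \<tau> \<le> left_inv (conjugate \<phi>) y (\<tau> + h x + h y)"
    by (rule AE_A2_ineq_conjugate[OF sigma_finite_lebesgue_on weak_Phi_measurable[OF assms(1)]
          borel_measurable_integrable[OF h] G hK \<beta>(1) \<open>\<sigma> + 2 * K < S\<close> AS])
  moreover have "AE x in lebesgue_on \<Omega>. \<bar>h x\<bar> \<le> K" "AE x in lebesgue_on \<Omega>. 0 \<le> h x"
    using hK by (auto elim: eventually_mono)
  ultimately show "\<exists>\<beta> h. 0 < \<beta> \<and> \<beta> \<le> 1 \<and> integrable (lebesgue_on \<Omega>) h \<and>
      (\<exists>M. AE x in lebesgue_on \<Omega>. \<bar>h x\<bar> \<le> M) \<and> (AE x in lebesgue_on \<Omega>. 0 \<le> h x) \<and>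
      (AE x in lebesgue_on \<Omega>. AE y in lebesgue_on \<Omega>. \<forall>\<tau>\<in>{0..\<sigma>}.
        ereal \<beta> * left_inv (conjugate \<phi>) x \<tau> \<le> left_inv (conjugate \<phi>) y (\<tau> + h x + h y))"
    using h by blast
qed

end
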